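(* For all $0<b<B$ there exists an instance $\langle A,f,c\rangle$ with $f$ XOS and $p(\{i\})\le b$ for all $i\in A$ such that $$\frac{\textsc{Max-Reward}(B)}{\textsc{Max-Reward}(b)}\ge\frac52.$$
   Context: An instance $\langle A,f,c\rangle$ consists of a finite set $A$ of agents, a monotone nondecreasing $f:2^A\to[0,1]$, and costs $c_i\ge0$. For $S\subseteq A$, $i\in S$: $f_S(i)=f(S)-f(S\setminus\{i\})$; $p(S)=\sum_{i\in S}c_i/f_S(i)$ (conventions: $0$ if $c_i=0=f_S(i)$, $\infty$ if $c_i>0=f_S(i)$). $f$ is XOS if it is the pointwise maximum of finitely many nonnegative additive set functions. $\textsc{Max-Reward}(B)=\max\{f(S):S\subseteq A,\ p(S)\le B\}$. *)

theory Defs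
  imports "HOL-Library.Extended_Real"
begin

text \<open>Agents are natural numbers; an instance is a finite agent set A, a set function
  f (only its values on subsets of A matter) and costs c.\<close>

definition marg :: "(nat set \<Rightarrow> real) \<Rightarrow> nat set \<Rightarrow> nat \<Rightarrow> real" where
  "marg f S i = f S - f (S - {i})"

definition pay :: "(nat set \<Rightarrow> real) \<Rightarrow> (nat \<Rightarrow> real) \<Rightarrow> nat set \<Rightarrow> ereal" where
  "pay f c S = (\<Sum>i\<in>S. if marg f S i = 0 then (if c i = 0 then 0 else \<infinity>)
                        else ereal (c i / marg f S i))"

definition monotone_sf :: "nat set \<Rightarrow> (nat set \<Rightarrow> real) \<Rightarrow> bool" where
  "monotone_sf A f \<longleftrightarrow> (\<forall>S T. S \<subseteq> T \<and> T \<subseteq> A \<longrightarrow> f S \<le> f T)"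

definition XOS :: "nat set \<Rightarrow> (nat set \<Rightarrow> real) \<Rightarrow> bool" where
  "XOS A f \<longleftrightarrow> (\<exists>W :: (nat \<Rightarrow> real) set. finite W \<and> W \<noteq> {} \<and>
      (\<forall>w\<in>W. \<forall>i\<in>A. w i \<ge> 0) \<and>
      (\<forall>S. S \<subseteq> A \<longrightarrow> f S = Max ((\<lambda>w. \<Sum>i\<in>S. w i) ` W)))"

definition is_instance :: "nat set \<Rightarrow> (nat set \<Rightarrow> real) \<Rightarrow> (nat \<Rightarrow> real) \<Rightarrow> bool" where
  "is_instance A f c \<longleftrightarrow> finite A \<and> monotone_sf A f \<and>
     (\<forall>S. S \<subseteq> A \<longrightarrow> 0 \<le> f S \<and> f S \<le> 1) \<and> (\<forall>i\<in>A. c i \<ge> 0)"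

definition max_reward :: "nat set \<Rightarrow> (nat set \<Rightarrow> real) \<Rightarrow> (nat \<Rightarrow> real) \<Rightarrow> real \<Rightarrow> real" where
  "max_reward A f c B = Max {f S | S. S \<subseteq> A \<and> pay f c S \<le> ereal B}"

end

theory Submission
  imports Defs
begin

text \<open>Three agents: agent 1 is free and alone worth 2/5, the outer agents 0 and 2 cost x each,
  with b < 5x \<le> min B (2b). The reward is the maximum of the additive functions
  (2/5, 1/5, 2/5) and (0, 2/5, 0). An outer agent alone has marginal value 2/5 and is paid 5x/2,
  which budget b covers. Every larger set containing an outer agent costs 5x > b: either both
  outer agents are paid 5x/2, or the marginal of the single outer agent next to agent 1 drops
  to 1/5. Hence budget b yields only 2/5, while budget B buys the grand coalition of value 1.\<close>

lemma XOS_imp_monotone_sf: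
  assumes "finite A" and "XOS A f"
  shows "monotone_sf A f"
  unfolding monotone_sf_def
proof (intro allI impI, elim conjE)
  fix S T assume "S \<subseteq> T" "T \<subseteq> A"
  from \<open>XOS A f\<close> obtain W :: "(nat \<Rightarrow> real) set" where
    W: "finite W" "W \<noteq> {}" "\<forall>w\<in>W. \<forall>i\<in>A. w i \<ge> 0"
      "\<forall>S. S \<subseteq> A \<longrightarrow> f S = Max ((\<lambda>w. \<Sum>i\<in>S. w i) ` W)"
    unfolding XOS_def by blast
  have "finite T" using \<open>T \<subseteq> A\<close> \<open>finite A\<close> by (rule finite_subset)
  have "\<exists>w'\<in>W. (\<Sum>i\<in>S. w i) \<le> (\<Sum>i\<in>T. w' i)" if "w \<in> W" for w
  proof
    show "(\<Sum>i\<in>S. w i) \<le> (\<Sum>i\<in>T. w i)"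
      using \<open>finite T\<close> \<open>S \<subseteq> T\<close> \<open>T \<subseteq> A\<close> W(3) that by (intro sum_mono2) auto
  qed (fact that)
  then have "Max ((\<lambda>w. \<Sum>i\<in>S. w i) ` W) \<le> Max ((\<lambda>w. \<Sum>i\<in>T. w i) ` W)"
    using W(1,2) by (intro Max.boundedI) (auto intro: Max_ge_iff[THEN iffD2])
  then show "f S \<le> f T"
    using W(4) \<open>S \<subseteq> T\<close> \<open>T \<subseteq> A\<close> by auto
qed

lemma max_reward_eqI:
  assumes "finite A"
    and "S\<^sub>0 \<subseteq> A" "pay f c S\<^sub>0 \<le> ereal B" "f S\<^sub>0 = r"
    and "\<And>S. S \<subseteq> A \<Longrightarrow> pay f c S \<le> ereal B \<Longrightarrow> f S \<le> r"
  shows "max_reward A f c B = r"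
  unfolding max_reward_def
proof (rule Max_eqI)
  have "{f S |S. S \<subseteq> A \<and> pay f c S \<le> ereal B} \<subseteq> f ` Pow A" by blast
  then show "finite {f S |S. S \<subseteq> A \<and> pay f c S \<le> ereal B}"
    using \<open>finite A\<close> by (simp add: finite_subset)
qed (use assms in auto)

definition spread_weights :: "nat \<Rightarrow> real" where
  "spread_weights i = (if i = 1 then 1/5 else if i = 0 \<or> i = 2 then 2/5 else 0)"

definition centre_weights :: "nat \<Rightarrow> real" where
  "centre_weights i = (if i = 1 then 2/5 else 0)"

definition gap_reward :: "nat set \<Rightarrow> real" where
  "gap_reward S = max (sum spread_weights S) (sum centre_weights S)"

definition gap_cost :: "real \<Rightarrow> nat \<Rightarrow> real" where
  "gap_cost x i = (if i = 1 then 0 else x)"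

lemma XOS_gap_reward: "XOS {0,1,2} gap_reward"
  unfolding XOS_def
  by (rule exI[of _ "{spread_weights, centre_weights}"])
     (auto simp: spread_weights_def centre_weights_def gap_reward_def)

lemma gap_reward_values:
  "gap_reward {} = 0" "gap_reward {0} = 2/5" "gap_reward {1} = 2/5" "gap_reward {2} = 2/5"
  "gap_reward {0,1} = 3/5" "gap_reward {0,2} = 4/5" "gap_reward {1,2} = 3/5"
  "gap_reward {0,1,2} = 1"
  by (simp_all add: gap_reward_def spread_weights_def centre_weights_def)

lemma pay_gap_values:
  assumes "x > 0"
  shows "pay gap_reward (gap_cost x) {} = 0"
    and "pay gap_reward (gap_cost x) {1} = 0"
    and "pay gap_reward (gap_cost x) {0} = ereal (5*x/2)"
    and "pay gap_reward (gap_cost x) {2} = ereal (5*x/2)"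
    and "pay gap_reward (gap_cost x) {0,1} = ereal (5*x)"
    and "pay gap_reward (gap_cost x) {1,2} = ereal (5*x)"
    and "pay gap_reward (gap_cost x) {0,2} = ereal (5*x)"
    and "pay gap_reward (gap_cost x) {0,1,2} = ereal (5*x)"
  using assms
  by (simp_all add: pay_def marg_def gap_reward_def spread_weights_def centre_weights_def
      gap_cost_def insert_Diff_if field_simps)

lemma subset_three_cases:
  assumes "S \<subseteq> {0,1,2::nat}"
  obtains "S = {}" | "S = {0}" | "S = {1}" | "S = {2}" | "S = {0,1}" | "S = {0,2}"
    | "S = {1,2}" | "S = {0,1,2}"
proof -
  from assms have "S \<in> Pow {0,1,2}" by simp
  then show ?thesis using that by (simp add: Pow_insert insert_commute) blast
qed

lemma gap_instance:
  assumes "x \<ge> 0"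
  shows "is_instance {0,1,2} gap_reward (gap_cost x)"
proof -
  have mono: "monotone_sf {0,1,2} gap_reward"
    using XOS_gap_reward by (rule XOS_imp_monotone_sf[rotated]) simp
  have "0 \<le> gap_reward S \<and> gap_reward S \<le> 1" if "S \<subseteq> {0,1,2}" for S
    using that by (cases rule: subset_three_cases) (use gap_reward_values in simp_all)
  with mono show ?thesis
    using assms by (auto simp: is_instance_def gap_cost_def)
qed

lemma max_reward_gap_large_budget:
  assumes "x > 0" and "5*x \<le> B"
  shows "max_reward {0,1,2} gap_reward (gap_cost x) B = 1"
proof (rule max_reward_eqI[where S\<^sub>0 = "{0,1,2}"])
  fix S :: "nat set" assume "S \<subseteq> {0,1,2}"
  then show "gap_reward S \<le> 1"
    by (cases rule: subset_three_cases) (use gap_reward_values in simp_all)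
qed (use assms pay_gap_values(8) gap_reward_values(8) in simp_all)

lemma max_reward_gap_small_budget:
  assumes "x > 0" and "0 \<le> b" and "b < 5*x"
  shows "max_reward {0,1,2} gap_reward (gap_cost x) b = 2/5"
proof (rule max_reward_eqI)
  show "pay gap_reward (gap_cost x) {1} \<le> ereal b"
    using assms pay_gap_values(2) by simp
next
  fix S assume "S \<subseteq> {0,1,2}" "pay gap_reward (gap_cost x) S \<le> ereal b"
  then show "gap_reward S \<le> 2/5"
    using assms pay_gap_values gap_reward_values by (cases rule: subset_three_cases) simp_all
qed (use gap_reward_values in simp_all)

theorem mainTheorem14:
  fixes b B :: real
  assumes "0 < b" and "b < B"
  shows "\<exists>(A::nat set) f c. is_instance A f c \<and> XOS A f \<and>
           (\<forall>i\<in>A. pay f c {i} \<le> ereal b) \<and>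
           max_reward A f c B / max_reward A f c b \<ge> 5/2"
proof -
  define x where "x = min B (2*b) / 5"
  have "x > 0" "5*x \<le> B" "5*x \<le> 2*b" "b < 5*x"
    using assms by (auto simp: x_def)
  have affordable: "\<forall>i\<in>{0,1,2}. pay gap_reward (gap_cost x) {i} \<le> ereal b"
    using \<open>x > 0\<close> \<open>5*x \<le> 2*b\<close> \<open>b > 0\<close> pay_gap_values by auto
  have large: "max_reward {0,1,2} gap_reward (gap_cost x) B = 1"
    using \<open>x > 0\<close> \<open>5*x \<le> B\<close> by (rule max_reward_gap_large_budget)
  have small: "max_reward {0,1,2} gap_reward (gap_cost x) b = 2/5"
    using \<open>x > 0\<close> less_imp_le[OF \<open>b > 0\<close>] \<open>b < 5*x\<close> by (rule max_reward_gap_small_budget)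
  have "max_reward {0,1,2} gap_reward (gap_cost x) B
      / max_reward {0,1,2} gap_reward (gap_cost x) b \<ge> 5/2"
    unfolding large small by simp
  with affordable gap_instance[of x] XOS_gap_reward \<open>x > 0\<close> show ?thesis
    by (intro exI[of _ "{0,1,2}"] exI[of _ gap_reward] exI[of _ "gap_cost x"]) simp
qed

end
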